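(* Let $\mathcal{A}$ be a unital semiprime algebra over a field $F$ with $\operatorname{char}(F)\neq2$. Then $\operatorname{QJDer}(\mathcal{A})=\operatorname{Cent}(\mathcal{A})+\operatorname{Der}(\mathcal{A})$.
   Context: $\mathcal{A}$ is semiprime if $a\mathcal{A}a=\{0\}$ implies $a=0$. $x\circ y=xy+yx$. $\operatorname{QJDer}(\mathcal{A})$: linear $f:\mathcal{A}\to\mathcal{A}$ for which there is a linear $h$ with $f(x)\circ y+x\circ f(y)=h(x\circ y)$ for all $x,y$. $\operatorname{Cent}(\mathcal{A})$: linear $f$ with $f(xy)=f(x)y=xf(y)$. $\operatorname{Der}(\mathcal{A})$: linear $d$ with $d(xy)=d(x)y+xd(y)$. Sums of sets of maps are sets of pointwise sums. *)

theory Defs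
  imports Complex_Main
begin

definition is_algebra :: "('f::field \<Rightarrow> 'a::ring \<Rightarrow> 'a) \<Rightarrow> bool" where
  "is_algebra smult \<longleftrightarrow> Vector_Spaces.vector_space smult \<and>
     (\<forall>c x y. smult c (x * y) = smult c x * y \<and> smult c (x * y) = x * smult c y)"

definition semiprime :: "'a::ring itself \<Rightarrow> bool" where
  "semiprime _ \<longleftrightarrow> (\<forall>a::'a. (\<forall>x. a * x * a = 0) \<longrightarrow> a = 0)"

definition jordan_prod :: "'a::ring \<Rightarrow> 'a \<Rightarrow> 'a" (infixl "\<circ>\<^sub>J" 70) where
  "x \<circ>\<^sub>J y = x * y + y * x"

definition QJDer :: "('f::field \<Rightarrow> 'a::ring \<Rightarrow> 'a) \<Rightarrow> ('a \<Rightarrow> 'a) set" where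
  "QJDer smult = {f. Vector_Spaces.linear smult smult f \<and>
     (\<exists>h. Vector_Spaces.linear smult smult h \<and>
        (\<forall>x y. f x \<circ>\<^sub>J y + x \<circ>\<^sub>J f y = h (x \<circ>\<^sub>J y)))}"

definition Cent :: "('f::field \<Rightarrow> 'a::ring \<Rightarrow> 'a) \<Rightarrow> ('a \<Rightarrow> 'a) set" where
  "Cent smult = {f. Vector_Spaces.linear smult smult f \<and>
     (\<forall>x y. f (x * y) = f x * y \<and> f (x * y) = x * f y)}"

definition Der :: "('f::field \<Rightarrow> 'a::ring \<Rightarrow> 'a) \<Rightarrow> ('a \<Rightarrow> 'a) set" where
  "Der smult = {d. Vector_Spaces.linear smult smult d \<and>
     (\<forall>x y. d (x * y) = d x * y + x * d y)}"

definition map_set_sum :: "('a \<Rightarrow> 'b::plus) set \<Rightarrow> ('a \<Rightarrow> 'b) set \<Rightarrow> ('a \<Rightarrow> 'b) set" where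
  "map_set_sum A B = {(\<lambda>x. f x + g x) | f g. f \<in> A \<and> g \<in> B}"

end

theory Submission
  imports Defs
begin

(* Let f be a quasi-Jordan derivation with companion h and put a = f 1.  Taking y = 1 in
   the defining identity gives 2 h z = 2 f z + z \<circ> a, so k = 2 f satisfies
   k (p \<circ> q) = k p \<circ> q + p \<circ> k q - (p \<circ> q) \<circ> a.  Applying k to both sides of the Jordan
   identity ((x \<circ> x) \<circ> y) \<circ> x = (x \<circ> x) \<circ> (y \<circ> x) cancels every k-term and leaves a
   commutator identity in a, x, y (the Jordan obstruction).  In a semiprime ring without
   2-torsion it forces [x, [a, x]] = 0 for all x, hence a is central.  Then f - a * _ is a
   Jordan derivation, hence a derivation (Herstein, Bresar), and a * _ lies in the centroid.
   Conversely c + d is a quasi-Jordan derivation with companion 2 c + d. *)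

definition commutator :: "'a::ring \<Rightarrow> 'a \<Rightarrow> 'a" ("\<langle>_,/ _\<rangle>")
  where "\<langle>x, y\<rangle> = x * y - y * x"

lemma commutator_self [simp]: "\<langle>x, x\<rangle> = 0"
  and commutator_zero_left [simp]: "\<langle>0, x\<rangle> = 0"
  and commutator_zero_right [simp]: "\<langle>x, 0\<rangle> = 0"
  by (simp_all add: commutator_def)

lemma commutator_add_left: "\<langle>x + x', y\<rangle> = \<langle>x, y\<rangle> + \<langle>x', y\<rangle>"
  and commutator_add_right: "\<langle>x, y + y'\<rangle> = \<langle>x, y\<rangle> + \<langle>x, y'\<rangle>"
  by (simp_all add: commutator_def algebra_simps)

lemma commutator_eq_0_iff: "\<langle>x, y\<rangle> = 0 \<longleftrightarrow> x * y = y * x"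
  by (simp add: commutator_def)

definition two_torsion_free :: "'a::ab_group_add itself \<Rightarrow> bool" where
  "two_torsion_free _ \<longleftrightarrow> (\<forall>a::'a. a + a = 0 \<longrightarrow> a = 0)"

lemma semiprimeD:
  fixes a :: "'a::ring"
  assumes "semiprime TYPE('a)" and "\<And>y. a * y * a = 0"
  shows "a = 0"
  using assms unfolding semiprime_def by blast

lemma two_torsion_freeD:
  fixes a :: "'a::ab_group_add"
  assumes "two_torsion_free TYPE('a)" and "a + a = 0"
  shows "a = 0"
  using assms unfolding two_torsion_free_def by blast

lemma two_torsion_free_double_cancel:
  fixes a b :: "'a::ab_group_add"
  assumes "two_torsion_free TYPE('a)" and "a + a = b + b"
  shows "a = b"
proof -
  have "(a - b) + (a - b) = 0" using assms(2) by (simp add: algebra_simps)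
  then have "a - b = 0" by (rule two_torsion_freeD[OF assms(1)])
  then show ?thesis by simp
qed

lemma semiprime_sandwich_sym_zero:
  fixes p q :: "'a::ring"
  assumes "semiprime TYPE('a)" and "two_torsion_free TYPE('a)"
    and sandwich: "\<And>z. p * z * q + q * z * p = 0"
  shows "p * z * q = 0"
proof (rule semiprimeD[OF assms(1)])
  have pqp: "p * y * q * w * p = 0" for y w
  proof (rule two_torsion_freeD[OF assms(2)])
    have "p * y * q * w * p + p * y * q * w * p
        = p * y * (p * w * q + q * w * p) + (p * y * q + q * y * p) * w * p
          - (p * (y * p * w) * q + q * (y * p * w) * p)"
      by (simp add: algebra_simps)
    then show "p * y * q * w * p + p * y * q * w * p = 0" by (simp add: sandwich)
  qed
  show "p * z * q * y * (p * z * q) = 0" for y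
    using pqp[of z y] by (simp add: mult.assoc[symmetric])
qed

lemma semiprime_cross_zero:
  fixes p q r s :: "'a::ring"
  assumes "semiprime TYPE('a)"
    and diag: "\<And>w. p * w * q = 0" and cross: "\<And>w. p * w * s + r * w * q = 0"
  shows "p * w * s = 0"
proof (rule semiprimeD[OF assms(1)])
  fix y
  have "p * w * s * y * (p * w * s)
      = p * w * s * y * (p * w * s + r * w * q) - p * (w * s * y * r * w) * q"
    by (simp add: algebra_simps)
  then show "p * w * s * y * (p * w * s) = 0" by (simp only: cross diag) simp
qed

lemma semiprime_central_if_annihilates_commutators:
  fixes a :: "'a::ring"
  assumes "semiprime TYPE('a)" and ann: "\<And>w u v. a * w * \<langle>u, v\<rangle> = 0"
  shows "a * z = z * a"
proof -
  have "\<langle>a, z\<rangle> * y * \<langle>a, z\<rangle> = 0" for y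
  proof -
    have "\<langle>a, z\<rangle> * y * \<langle>a, z\<rangle> = a * (z * y) * \<langle>a, z\<rangle> - z * (a * y * \<langle>a, z\<rangle>)"
      by (simp add: commutator_def algebra_simps)
    then show ?thesis by (simp only: ann) simp
  qed
  then have "\<langle>a, z\<rangle> = 0" by (rule semiprimeD[OF assms(1)])
  then show ?thesis by (simp add: commutator_eq_0_iff)
qed

lemma semiprime_central_square_zero:
  fixes a :: "'a::ring"
  assumes "semiprime TYPE('a)" and central: "\<And>z. a * z = z * a" and "a * a = 0"
  shows "a = 0"
proof (rule semiprimeD[OF assms(1)])
  show "a * y * a = 0" for y
    by (metis assms(3) central mult.assoc mult_zero_left)
qed

lemma semiprime_central_if_commuting_commutators:
  fixes a :: "'a::ring"
  assumes "semiprime TYPE('a)" and commuting: "\<And>x. \<langle>x, \<langle>x, a\<rangle>\<rangle> = 0"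
  shows "a * z = z * a"
proof -
  have linearized: "\<langle>p, \<langle>q, a\<rangle>\<rangle> + \<langle>q, \<langle>p, a\<rangle>\<rangle> = 0" for p q
  proof -
    have "\<langle>p, \<langle>q, a\<rangle>\<rangle> + \<langle>q, \<langle>p, a\<rangle>\<rangle> = \<langle>p + q, \<langle>p + q, a\<rangle>\<rangle> - \<langle>p, \<langle>p, a\<rangle>\<rangle> - \<langle>q, \<langle>q, a\<rangle>\<rangle>"
      by (simp add: commutator_def algebra_simps)
    also have "\<dots> = 0"
      by (simp only: commuting) simp
    finally show ?thesis .
  qed
  have annihilates: "\<langle>x, y\<rangle> * \<langle>x, a\<rangle> = 0" for x y
  proof -
    have "\<langle>x, y\<rangle> * \<langle>x, a\<rangle> = (\<langle>x, \<langle>y * x, a\<rangle>\<rangle> + \<langle>y * x, \<langle>x, a\<rangle>\<rangle>)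
        - (\<langle>x, \<langle>y, a\<rangle>\<rangle> + \<langle>y, \<langle>x, a\<rangle>\<rangle>) * x - (y * \<langle>x, \<langle>x, a\<rangle>\<rangle> + y * \<langle>x, \<langle>x, a\<rangle>\<rangle>)"
      by (simp add: commutator_def algebra_simps)
    also have "\<dots> = 0"
      by (simp only: linearized commuting) simp
    finally show ?thesis .
  qed
  have "\<langle>z, a\<rangle> * y * \<langle>z, a\<rangle> = 0" for y
  proof -
    have "\<langle>z, a\<rangle> * y * \<langle>z, a\<rangle> = \<langle>z, a * y\<rangle> * \<langle>z, a\<rangle> - a * (\<langle>z, y\<rangle> * \<langle>z, a\<rangle>)"
      by (simp add: commutator_def algebra_simps)
    also have "\<dots> = 0"
      by (simp only: annihilates) simp
    finally show ?thesis .
  qed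
  then have "\<langle>z, a\<rangle> = 0"
    by (rule semiprimeD[OF assms(1)])
  then show ?thesis
    by (simp add: commutator_eq_0_iff)
qed

locale jordan_derivation = additive d for d :: "'a::ring \<Rightarrow> 'a" +
  assumes jordan: "d (x \<circ>\<^sub>J y) = d x \<circ>\<^sub>J y + x \<circ>\<^sub>J d y"
begin

lemma jordan_expanded: "d (x * y + y * x) = d x * y + x * d y + d y * x + y * d x"
  using jordan[of x y] by (simp add: jordan_prod_def algebra_simps)

definition defect :: "'a \<Rightarrow> 'a \<Rightarrow> 'a"
  where "defect x y = d (x * y) - d x * y - x * d y"

lemma defect_add_left: "defect (x + x') y = defect x y + defect x' y"
  and defect_add_right: "defect x (y + y') = defect x y + defect x y'"
  by (simp_all add: defect_def add algebra_simps)

lemma defect_antisym: "defect y x = - defect x y"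
  using jordan_expanded[of x y] by (simp add: defect_def add algebra_simps)

context
  assumes two_torsion_free: "two_torsion_free TYPE('a)"
begin

lemma square: "d (x * x) = d x * x + x * d x"
proof (rule two_torsion_free_double_cancel[OF two_torsion_free])
  show "d (x * x) + d (x * x) = (d x * x + x * d x) + (d x * x + x * d x)"
    using jordan_expanded[of x x] by (simp add: add algebra_simps)
qed

lemma triple: "d (x * y * x) = d x * y * x + x * d y * x + x * y * d x"
proof (rule two_torsion_free_double_cancel[OF two_torsion_free])
  have "x * y * x + x * y * x = x \<circ>\<^sub>J (x \<circ>\<^sub>J y) - (x * x) \<circ>\<^sub>J y"
    by (simp add: jordan_prod_def algebra_simps)
  from arg_cong[of _ _ d, OF this]
  have "d (x * y * x) + d (x * y * x) = d (x \<circ>\<^sub>J (x \<circ>\<^sub>J y)) - d ((x * x) \<circ>\<^sub>J y)"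
    by (simp only: add diff)
  also have "\<dots> = (d x * y * x + x * d y * x + x * y * d x) + (d x * y * x + x * d y * x + x * y * d x)"
    unfolding jordan square by (simp add: jordan_prod_def algebra_simps)
  finally show "d (x * y * x) + d (x * y * x) = \<dots>" .
qed

lemma triple_sym:
  "d (x * y * z + z * y * x) = d x * y * z + x * d y * z + x * y * d z + d z * y * x + z * d y * x + z * y * d x"
proof -
  have "x * y * z + z * y * x = (x + z) * y * (x + z) - x * y * x - z * y * z"
    by (simp add: algebra_simps)
  then have "d (x * y * z + z * y * x) = d ((x + z) * y * (x + z)) - d (x * y * x) - d (z * y * z)"
    by (simp add: diff)
  then show ?thesis
    unfolding triple add by (simp add: algebra_simps)
qed

(* Evaluate d on (xy) r (yx) + (yx) r (xy) = x (yry) x + y (xrx) y in the two possible ways. *)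
lemma defect_sandwich: "defect x y * r * \<langle>x, y\<rangle> + \<langle>x, y\<rangle> * r * defect x y = 0"
proof -
  have outer: "d ((x * y) * r * (y * x) + (y * x) * r * (x * y))
    = d (x * y) * r * (y * x) + (x * y) * d r * (y * x) + (x * y) * r * d (y * x)
      + d (y * x) * r * (x * y) + (y * x) * d r * (x * y) + (y * x) * r * d (x * y)"
    by (rule triple_sym)
  have inner: "d (x * (y * r * y) * x + y * (x * r * x) * y)
    = d x * (y * r * y) * x + x * (d y * r * y + y * d r * y + y * r * d y) * x + x * (y * r * y) * d x
      + (d y * (x * r * x) * y + y * (d x * r * x + x * d r * x + x * r * d x) * y + y * (x * r * x) * d y)"
    by (simp only: add triple)
  have swap: "d (y * x) = d x * y + x * d y + d y * x + y * d x - d (x * y)"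
    using jordan_expanded[of x y] by (simp add: add algebra_simps)
  have same_argument: "(x * y) * r * (y * x) + (y * x) * r * (x * y) = x * (y * r * y) * x + y * (x * r * x) * y"
    by (simp add: algebra_simps)
  have "defect x y * r * \<langle>x, y\<rangle> + \<langle>x, y\<rangle> * r * defect x y
    = d (x * (y * r * y) * x + y * (x * r * x) * y) - d ((x * y) * r * (y * x) + (y * x) * r * (x * y))"
    unfolding outer inner swap defect_def commutator_def by (simp add: algebra_simps)
  also have "\<dots> = 0"
    unfolding same_argument by simp
  finally show ?thesis .
qed

end

context
  assumes semiprime: "semiprime TYPE('a)" and two_torsion_free: "two_torsion_free TYPE('a)"
begin

lemma defect_annihilates_own_commutator: "defect x y * r * \<langle>x, y\<rangle> = 0"
  using semiprime two_torsion_free defect_sandwich[OF two_torsion_free]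
  by (rule semiprime_sandwich_sym_zero)

lemma defect_annihilates_commutators: "defect x y * r * \<langle>u, v\<rangle> = 0"
proof -
  have left: "defect x y * r * \<langle>u, y\<rangle> = 0" for y r
  proof (rule semiprime_cross_zero[OF semiprime])
    show "defect x y * w * \<langle>x, y\<rangle> = 0" for w
      by (rule defect_annihilates_own_commutator)
    show "defect x y * w * \<langle>u, y\<rangle> + defect u y * w * \<langle>x, y\<rangle> = 0" for w
      using defect_annihilates_own_commutator[of "x + u" y w]
      by (simp add: defect_add_left commutator_add_left distrib_left distrib_right
          defect_annihilates_own_commutator add_ac)
  qed
  show ?thesis
  proof (rule semiprime_cross_zero[OF semiprime])
    show "defect x y * w * \<langle>u, y\<rangle> = 0" for w
      by (rule left)
    show "defect x y * w * \<langle>u, v\<rangle> + defect x v * w * \<langle>u, y\<rangle> = 0" for w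
      using left[of "y + v" w]
      by (simp add: defect_add_right commutator_add_right distrib_left distrib_right left add_ac)
  qed
qed

lemma defect_central: "defect x y * z = z * defect x y"
  using semiprime defect_annihilates_commutators by (rule semiprime_central_if_annihilates_commutators)

lemma defect_mult_commutator: "defect x y * \<langle>u, v\<rangle> = 0"
proof (rule semiprimeD[OF semiprime])
  show "defect x y * \<langle>u, v\<rangle> * w * (defect x y * \<langle>u, v\<rangle>) = 0" for w
    using defect_annihilates_commutators[of x y "\<langle>u, v\<rangle> * w * defect x y" u v]
    by (simp add: mult.assoc)
qed

lemma defect_square_mult_derivative_commutator: "defect x y * defect x y * d \<langle>u, v\<rangle> = 0"
proof (rule two_torsion_freeD[OF two_torsion_free])
  let ?a = "defect x y" and ?c = "\<langle>u, v\<rangle>"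
  have "?c * ?a = 0"
    using defect_mult_commutator defect_central by metis
  then have "d (?a * ?c + ?c * ?a) = 0"
    by (simp add: defect_mult_commutator zero)
  then have jordan_zero: "d ?a * ?c + ?a * d ?c + d ?c * ?a + ?c * d ?a = 0"
    by (simp only: jordan_expanded)
  have "?a * ?a * d ?c + ?a * ?a * d ?c
    = ?a * (d ?a * ?c + ?a * d ?c + d ?c * ?a + ?c * d ?a) - (?a * d ?a - d ?a * ?a) * ?c
      - d ?a * (?a * ?c) - ?a * (d ?c * ?a - ?a * d ?c) - (?a * ?c) * d ?a"
    by (simp add: algebra_simps)
  also have "\<dots> = 0"
    using jordan_zero defect_mult_commutator defect_central[of x y "d ?a"] defect_central[of x y "d ?c"]
    by simp
  finally show "?a * ?a * d ?c + ?a * ?a * d ?c = 0" .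
qed

lemma defect_eq_0: "defect x y = 0"
proof -
  let ?a = "defect x y"
  have "?a + ?a = defect x y - defect y x"
    using defect_antisym[of y x] by simp
  also have "\<dots> = d \<langle>x, y\<rangle> - \<langle>d x, y\<rangle> - \<langle>x, d y\<rangle>"
    by (simp add: defect_def commutator_def diff algebra_simps)
  finally have double: "?a + ?a = d \<langle>x, y\<rangle> - \<langle>d x, y\<rangle> - \<langle>x, d y\<rangle>" .
  have cube: "?a * ?a * ?a = 0"
  proof (rule two_torsion_freeD[OF two_torsion_free])
    have "?a * ?a * ?a + ?a * ?a * ?a = ?a * ?a * (d \<langle>x, y\<rangle> - \<langle>d x, y\<rangle> - \<langle>x, d y\<rangle>)"
      unfolding double[symmetric] by (simp add: algebra_simps)
    also have "\<dots> = ?a * ?a * d \<langle>x, y\<rangle> - ?a * (?a * \<langle>d x, y\<rangle>) - ?a * (?a * \<langle>x, d y\<rangle>)"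
      by (simp add: algebra_simps)
    finally show "?a * ?a * ?a + ?a * ?a * ?a = 0"
      by (simp only: defect_mult_commutator defect_square_mult_derivative_commutator) simp
  qed
  have square: "?a * ?a = 0"
  proof (rule semiprime_central_square_zero[OF semiprime])
    show "?a * ?a * z = z * (?a * ?a)" for z
      by (metis defect_central mult.assoc)
    have "?a * ?a * (?a * ?a) = ?a * ?a * ?a * ?a" by (simp add: mult.assoc)
    then show "?a * ?a * (?a * ?a) = 0" by (simp add: cube)
  qed
  show ?thesis
    using semiprime defect_central square by (rule semiprime_central_square_zero)
qed

theorem derivation: "d (x * y) = d x * y + x * d y"
  using defect_eq_0[of x y] by (simp add: defect_def algebra_simps)

end

end

lemma jordan_prod_add_left: "(x + x') \<circ>\<^sub>J y = x \<circ>\<^sub>J y + x' \<circ>\<^sub>J y"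
  and jordan_prod_add_right: "x \<circ>\<^sub>J (y + y') = x \<circ>\<^sub>J y + x \<circ>\<^sub>J y'"
  and jordan_prod_diff_left: "(x - x') \<circ>\<^sub>J y = x \<circ>\<^sub>J y - x' \<circ>\<^sub>J y"
  and jordan_prod_diff_right: "x \<circ>\<^sub>J (y - y') = x \<circ>\<^sub>J y - x \<circ>\<^sub>J y'"
  by (simp_all add: jordan_prod_def algebra_simps)

lemmas jordan_prod_distribs =
  jordan_prod_add_left jordan_prod_add_right jordan_prod_diff_left jordan_prod_diff_right

lemma jordan_identity: "((x \<circ>\<^sub>J x) \<circ>\<^sub>J y) \<circ>\<^sub>J x = (x \<circ>\<^sub>J x) \<circ>\<^sub>J (y \<circ>\<^sub>J x)"
  by (simp add: jordan_prod_def algebra_simps)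

lemma jordan_identity_linearized:
  "((x \<circ>\<^sub>J x) \<circ>\<^sub>J y) \<circ>\<^sub>J u
    = (u \<circ>\<^sub>J x + x \<circ>\<^sub>J u) \<circ>\<^sub>J (y \<circ>\<^sub>J x) + (x \<circ>\<^sub>J x) \<circ>\<^sub>J (y \<circ>\<^sub>J u)
      - ((u \<circ>\<^sub>J x + x \<circ>\<^sub>J u) \<circ>\<^sub>J y) \<circ>\<^sub>J x"
  by (simp add: jordan_prod_def algebra_simps)

lemma jordan_defect_cocycle:
  fixes g :: "'a::ring \<Rightarrow> 'a" and \<delta> :: "'a \<Rightarrow> 'a \<Rightarrow> 'a"
  assumes "\<And>p q. g (p \<circ>\<^sub>J q) = g p \<circ>\<^sub>J q + p \<circ>\<^sub>J g q - \<delta> p q"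
  shows "\<delta> ((x \<circ>\<^sub>J x) \<circ>\<^sub>J y) x + \<delta> (x \<circ>\<^sub>J x) y \<circ>\<^sub>J x + (\<delta> x x \<circ>\<^sub>J y) \<circ>\<^sub>J x
    = \<delta> (x \<circ>\<^sub>J x) (y \<circ>\<^sub>J x) + \<delta> x x \<circ>\<^sub>J (y \<circ>\<^sub>J x) + (x \<circ>\<^sub>J x) \<circ>\<^sub>J \<delta> y x"
proof -
  have defect: "\<delta> p q = g p \<circ>\<^sub>J q + p \<circ>\<^sub>J g q - g (p \<circ>\<^sub>J q)" for p q
    using assms[of p q] by simp
  show ?thesis
    unfolding defect jordan_identity jordan_identity_linearized[of x y "g x"]
    by (simp add: jordan_prod_distribs jordan_identity algebra_simps)
qed

(* Half of the Jordan cocycle of (p, q) \<mapsto> (p \<circ> q) \<circ> a, rewritten with commutators. *)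
definition jordan_obstruction :: "'a::ring \<Rightarrow> 'a \<Rightarrow> 'a \<Rightarrow> 'a" where
  "jordan_obstruction a x y =
    \<langle>\<langle>x, \<langle>x, y\<rangle>\<rangle>, \<langle>a, x\<rangle>\<rangle> + \<langle>\<langle>x, y\<rangle>, \<langle>x, \<langle>a, x\<rangle>\<rangle>\<rangle> + \<langle>y, \<langle>x, \<langle>x, \<langle>a, x\<rangle>\<rangle>\<rangle>\<rangle>"

lemma jordan_prod_self: "x \<circ>\<^sub>J x = x * x + x * x"
  by (simp add: jordan_prod_def)

lemma twisted_jordan_obstruction_eq_0:
  fixes k :: "'a::ring \<Rightarrow> 'a"
  assumes "two_torsion_free TYPE('a)"
    and twisted: "\<And>p q. k (p \<circ>\<^sub>J q) = k p \<circ>\<^sub>J q + p \<circ>\<^sub>J k q - (p \<circ>\<^sub>J q) \<circ>\<^sub>J a"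
  shows "jordan_obstruction a x y = 0"
proof -
  let ?\<delta> = "\<lambda>p q. (p \<circ>\<^sub>J q) \<circ>\<^sub>J a"
  let ?Z = "\<lambda>u. ((u \<circ>\<^sub>J y) \<circ>\<^sub>J a) \<circ>\<^sub>J x + ((u \<circ>\<^sub>J a) \<circ>\<^sub>J y) \<circ>\<^sub>J x
    - (u \<circ>\<^sub>J a) \<circ>\<^sub>J (y \<circ>\<^sub>J x) - u \<circ>\<^sub>J ((y \<circ>\<^sub>J x) \<circ>\<^sub>J a)"
  have "?\<delta> ((x \<circ>\<^sub>J x) \<circ>\<^sub>J y) x + ?\<delta> (x \<circ>\<^sub>J x) y \<circ>\<^sub>J x + (?\<delta> x x \<circ>\<^sub>J y) \<circ>\<^sub>J x
    = ?\<delta> (x \<circ>\<^sub>J x) (y \<circ>\<^sub>J x) + ?\<delta> x x \<circ>\<^sub>J (y \<circ>\<^sub>J x) + (x \<circ>\<^sub>J x) \<circ>\<^sub>J ?\<delta> y x"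
    using twisted by (rule jordan_defect_cocycle)
  then have "?Z (x * x) + ?Z (x * x) = 0"
    unfolding jordan_identity by (simp add: jordan_prod_self jordan_prod_distribs algebra_simps)
  then have "?Z (x * x) = 0"
    by (rule two_torsion_freeD[OF assms(1)])
  moreover have "jordan_obstruction a x y = ?Z (x * x)"
    by (simp add: jordan_obstruction_def commutator_def jordan_prod_def algebra_simps)
  ultimately show ?thesis
    by simp
qed

context
  fixes a :: "'a::ring"
  assumes semiprime: "semiprime TYPE('a)"
    and obstruction: "\<And>x y. jordan_obstruction a x y = 0"
begin

lemma obstruction_fourth_commutator: "\<langle>x, \<langle>x, \<langle>x, \<langle>a, x\<rangle>\<rangle>\<rangle>\<rangle> = 0"
  using obstruction[of x x] by (simp add: jordan_obstruction_def)

lemma obstruction_annihilates_third_commutator: "\<langle>x, \<langle>x, y\<rangle>\<rangle> * \<langle>x, \<langle>x, \<langle>a, x\<rangle>\<rangle>\<rangle> = 0"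
proof -
  let ?c = "\<langle>x, \<langle>x, \<langle>a, x\<rangle>\<rangle>\<rangle>"
  have first: "\<langle>x, \<langle>x, y\<rangle>\<rangle> * \<langle>x, \<langle>a, x\<rangle>\<rangle> + \<langle>x, y\<rangle> * ?c = 0" for y
  proof -
    have "\<langle>x, \<langle>x, y\<rangle>\<rangle> * \<langle>x, \<langle>a, x\<rangle>\<rangle> + \<langle>x, y\<rangle> * ?c
        = jordan_obstruction a x (y * x) - jordan_obstruction a x y * x - y * \<langle>x, ?c\<rangle>"
      by (simp add: jordan_obstruction_def commutator_def algebra_simps)
    also have "\<dots> = 0"
      by (simp only: obstruction obstruction_fourth_commutator) simp
    finally show ?thesis .
  qed
  have "\<langle>x, \<langle>x, y\<rangle>\<rangle> * ?c
      = (\<langle>x, \<langle>x, y * x\<rangle>\<rangle> * \<langle>x, \<langle>a, x\<rangle>\<rangle> + \<langle>x, y * x\<rangle> * ?c)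
        - (\<langle>x, \<langle>x, y\<rangle>\<rangle> * \<langle>x, \<langle>a, x\<rangle>\<rangle> + \<langle>x, y\<rangle> * ?c) * x - \<langle>x, y\<rangle> * \<langle>x, ?c\<rangle>"
    by (simp add: commutator_def algebra_simps)
  also have "\<dots> = 0"
    by (simp only: first obstruction_fourth_commutator) simp
  finally show ?thesis .
qed

lemma obstruction_third_commutator: "\<langle>x, \<langle>x, \<langle>a, x\<rangle>\<rangle>\<rangle> = 0"
proof (rule semiprimeD[OF semiprime])
  let ?c = "\<langle>x, \<langle>x, \<langle>a, x\<rangle>\<rangle>\<rangle>"
  fix z
  have "?c * z * ?c
      = \<langle>x, \<langle>x, a * x * z + a * x * z + a * x * z - a * z * x - a * z * x - x * a * z\<rangle>\<rangle> * ?c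
        + a * (\<langle>x, \<langle>x, x * z + z * x + z * x\<rangle>\<rangle> * ?c)
        - (x * a + x * a + x * a) * (\<langle>x, \<langle>x, z\<rangle>\<rangle> * ?c)"
    by (simp add: commutator_def algebra_simps)
  also have "\<dots> = 0"
    by (simp only: obstruction_annihilates_third_commutator) simp
  finally show "?c * z * ?c = 0" .
qed

lemma obstruction_second_commutator_annihilates: "\<langle>x, \<langle>a, x\<rangle>\<rangle> * \<langle>x, \<langle>x, y\<rangle>\<rangle> = 0"
proof -
  let ?c = "\<langle>x, \<langle>x, \<langle>a, x\<rangle>\<rangle>\<rangle>"
  have "\<langle>x, \<langle>a, x\<rangle>\<rangle> * \<langle>x, \<langle>x, y\<rangle>\<rangle>
      = jordan_obstruction a x (x * y) - x * jordan_obstruction a x y + ?c * y * x - x * ?c * y"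
    by (simp add: jordan_obstruction_def commutator_def algebra_simps)
  also have "\<dots> = 0"
    by (simp only: obstruction obstruction_third_commutator) simp
  finally show ?thesis .
qed

context
  assumes two_torsion_free: "two_torsion_free TYPE('a)"
begin

lemma obstruction_third_commutator_linearized:
  "\<langle>t, \<langle>x, \<langle>a, x\<rangle>\<rangle>\<rangle> + \<langle>x, \<langle>t, \<langle>a, x\<rangle>\<rangle>\<rangle> + \<langle>x, \<langle>x, \<langle>a, t\<rangle>\<rangle>\<rangle> = 0" (is "?l = 0")
proof (rule two_torsion_freeD[OF two_torsion_free])
  have "?l + ?l = \<langle>x + t, \<langle>x + t, \<langle>a, x + t\<rangle>\<rangle>\<rangle> - \<langle>x - t, \<langle>x - t, \<langle>a, x - t\<rangle>\<rangle>\<rangle>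
      - \<langle>t, \<langle>t, \<langle>a, t\<rangle>\<rangle>\<rangle> - \<langle>t, \<langle>t, \<langle>a, t\<rangle>\<rangle>\<rangle>"
    by (simp add: commutator_def algebra_simps)
  also have "\<dots> = 0"
    by (simp only: obstruction_third_commutator) simp
  finally show "?l + ?l = 0" .
qed

lemma obstruction_second_commutator: "\<langle>x, \<langle>a, x\<rangle>\<rangle> = 0"
proof (rule semiprimeD[OF semiprime])
  fix z
  let ?e = "\<langle>a, x\<rangle>"
  let ?b = "\<langle>x, ?e\<rangle>"
  let ?\<Lambda> = "\<lambda>t. \<langle>t, ?b\<rangle> + \<langle>x, \<langle>t, ?e\<rangle>\<rangle> + \<langle>x, \<langle>x, \<langle>a, t\<rangle>\<rangle>\<rangle>"
  have "?b * z * ?b + ?b * z * ?b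
      = (?\<Lambda> (?e * z * x) - ?\<Lambda> (?e * z) * x - ?e * (?\<Lambda> (z * x) - ?\<Lambda> z * x) - \<langle>x, ?b\<rangle> * z * ?e)
        - (?b * \<langle>x, \<langle>x, z\<rangle>\<rangle> * a - ?b * \<langle>x, \<langle>x, z * a\<rangle>\<rangle>)"
    by (simp add: commutator_def algebra_simps)
  also have "\<dots> = 0"
    by (simp only: obstruction_third_commutator_linearized obstruction_second_commutator_annihilates
        obstruction_third_commutator) simp
  finally show "?b * z * ?b = 0"
    by (rule two_torsion_freeD[OF two_torsion_free])
qed

lemma obstruction_central: "a * z = z * a"
proof (rule semiprime_central_if_commuting_commutators[OF semiprime])
  show "\<langle>x, \<langle>x, a\<rangle>\<rangle> = 0" for x
    using obstruction_second_commutator[of x] by (simp add: commutator_def algebra_simps)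
qed

end

end

lemma two_torsion_free_if_two_neq_0:
  fixes smult :: "'f::field \<Rightarrow> 'a::ring \<Rightarrow> 'a"
  assumes "Vector_Spaces.vector_space smult" and "(2::'f) \<noteq> 0"
  shows "two_torsion_free TYPE('a)"
  unfolding two_torsion_free_def
proof (intro allI impI)
  interpret vector_space smult by fact
  fix c :: 'a
  assume "c + c = 0"
  have "c = smult (inverse 2) (smult 2 c)"
    using assms(2) by simp
  also have "smult 2 c = c + c"
    using scale_left_distrib[of 1 1 c] by simp
  finally show "c = 0"
    using \<open>c + c = 0\<close> by simp
qed

lemma additive_if_linear: "Vector_Spaces.linear s s f \<Longrightarrow> additive f"
  by (simp add: additive_def Vector_Spaces.linear_iff)

lemma quasi_jordan_double_twisted:
  fixes f h :: "'a::ring_1 \<Rightarrow> 'a"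
  assumes "additive f" and "additive h"
    and quasi_jordan: "\<And>x y. f x \<circ>\<^sub>J y + x \<circ>\<^sub>J f y = h (x \<circ>\<^sub>J y)"
  shows "f (p \<circ>\<^sub>J q) + f (p \<circ>\<^sub>J q) = (f p + f p) \<circ>\<^sub>J q + p \<circ>\<^sub>J (f q + f q) - (p \<circ>\<^sub>J q) \<circ>\<^sub>J f 1"
proof -
  interpret h: additive h by fact
  have "h z + h z = f z + f z + z \<circ>\<^sub>J f 1" for z
    using quasi_jordan[of z 1] by (simp add: jordan_prod_def h.add)
  then have "f (p \<circ>\<^sub>J q) + f (p \<circ>\<^sub>J q) = h (p \<circ>\<^sub>J q) + h (p \<circ>\<^sub>J q) - (p \<circ>\<^sub>J q) \<circ>\<^sub>J f 1"
    by (simp add: algebra_simps)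
  then show ?thesis
    by (simp add: quasi_jordan[symmetric] jordan_prod_distribs algebra_simps)
qed

lemma linear_left_mult:
  assumes "is_algebra smult"
  shows "Vector_Spaces.linear smult smult (\<lambda>x. a * x)"
proof -
  have "smult c (a * x) = a * smult c x" for c x
    using assms unfolding is_algebra_def by blast
  then show ?thesis
    using assms by (simp add: is_algebra_def Vector_Spaces.linear_iff distrib_left)
qed

lemma left_mult_in_Cent:
  assumes "is_algebra smult" and central: "\<And>z. a * z = z * a"
  shows "(\<lambda>x. a * x) \<in> Cent smult"
proof -
  have "a * (x * y) = a * x * y \<and> a * (x * y) = x * (a * y)" for x y
    by (metis central mult.assoc)
  with linear_left_mult[OF assms(1)] show ?thesis
    unfolding Cent_def by blast
qed

lemma Cent_Der_sum_in_QJDer: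
  assumes "is_algebra smult" and "c \<in> Cent smult" and "d \<in> Der smult"
  shows "(\<lambda>x. c x + d x) \<in> QJDer smult"
proof -
  interpret vector_space_pair smult smult
    using assms(1) by (simp add: is_algebra_def vector_space_pair_def)
  have lin_c: "Vector_Spaces.linear smult smult c" and c_left: "c (x * y) = c x * y"
    and c_right: "c (x * y) = x * c y" for x y
    using assms(2) unfolding Cent_def by blast+
  have lin_d: "Vector_Spaces.linear smult smult d" and d_leibniz: "d (x * y) = d x * y + x * d y" for x y
    using assms(3) unfolding Der_def by blast+
  have "(c x + d x) \<circ>\<^sub>J y + x \<circ>\<^sub>J (c y + d y) = c (x \<circ>\<^sub>J y) + c (x \<circ>\<^sub>J y) + d (x \<circ>\<^sub>J y)" for x y
    by (simp add: jordan_prod_def d_leibniz c_left[symmetric] c_right[symmetric]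
        linear_add[OF lin_c] linear_add[OF lin_d] algebra_simps)
  moreover have "Vector_Spaces.linear smult smult (\<lambda>x. c x + c x + d x)"
    by (intro linear_compose_add lin_c lin_d)
  moreover have "Vector_Spaces.linear smult smult (\<lambda>x. c x + d x)"
    by (intro linear_compose_add lin_c lin_d)
  ultimately show ?thesis
    unfolding QJDer_def by blast
qed

lemma jordan_derivation_of_central_twist:
  fixes f :: "'a::ring \<Rightarrow> 'a"
  assumes "two_torsion_free TYPE('a)" and "additive f" and central: "\<And>z. a * z = z * a"
    and twisted: "\<And>p q. f (p \<circ>\<^sub>J q) + f (p \<circ>\<^sub>J q)
      = (f p + f p) \<circ>\<^sub>J q + p \<circ>\<^sub>J (f q + f q) - (p \<circ>\<^sub>J q) \<circ>\<^sub>J a"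
  shows "jordan_derivation (\<lambda>x. f x - a * x)"
proof
  interpret f: additive f by fact
  show "f (x + y) - a * (x + y) = (f x - a * x) + (f y - a * y)" for x y
    by (simp add: f.add algebra_simps)
  have left_mult: "(a * p) \<circ>\<^sub>J q = a * (p \<circ>\<^sub>J q)" "p \<circ>\<^sub>J (a * q) = a * (p \<circ>\<^sub>J q)" for p q
    by (simp_all add: jordan_prod_def distrib_left) (metis central mult.assoc)+
  show "f (x \<circ>\<^sub>J y) - a * (x \<circ>\<^sub>J y) = (f x - a * x) \<circ>\<^sub>J y + x \<circ>\<^sub>J (f y - a * y)" for x y
  proof (rule two_torsion_free_double_cancel[OF assms(1)])
    have right_mult: "(x \<circ>\<^sub>J y) \<circ>\<^sub>J a = a * (x \<circ>\<^sub>J y) + a * (x \<circ>\<^sub>J y)"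
      using central[of "x \<circ>\<^sub>J y"] by (simp add: jordan_prod_def)
    show "(f (x \<circ>\<^sub>J y) - a * (x \<circ>\<^sub>J y)) + (f (x \<circ>\<^sub>J y) - a * (x \<circ>\<^sub>J y))
      = ((f x - a * x) \<circ>\<^sub>J y + x \<circ>\<^sub>J (f y - a * y)) + ((f x - a * x) \<circ>\<^sub>J y + x \<circ>\<^sub>J (f y - a * y))"
      using twisted[of x y] unfolding right_mult
      by (simp add: jordan_prod_distribs left_mult algebra_simps)
  qed
qed

lemma QJDer_in_Cent_Der_sum:
  fixes smult :: "'f::field \<Rightarrow> 'a::ring_1 \<Rightarrow> 'a"
  assumes "is_algebra smult" and semiprime: "semiprime TYPE('a)"
    and two_torsion_free: "two_torsion_free TYPE('a)" and "f \<in> QJDer smult"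
  shows "f \<in> map_set_sum (Cent smult) (Der smult)"
proof -
  interpret vector_space_pair smult smult
    using assms(1) by (simp add: is_algebra_def vector_space_pair_def)
  obtain h where lin_f: "Vector_Spaces.linear smult smult f"
    and lin_h: "Vector_Spaces.linear smult smult h"
    and quasi_jordan: "\<And>x y. f x \<circ>\<^sub>J y + x \<circ>\<^sub>J f y = h (x \<circ>\<^sub>J y)"
    using \<open>f \<in> QJDer smult\<close> unfolding QJDer_def by blast
  define a where "a = f 1"
  have twisted: "f (p \<circ>\<^sub>J q) + f (p \<circ>\<^sub>J q)
      = (f p + f p) \<circ>\<^sub>J q + p \<circ>\<^sub>J (f q + f q) - (p \<circ>\<^sub>J q) \<circ>\<^sub>J a" for p q
    unfolding a_def using additive_if_linear[OF lin_f] additive_if_linear[OF lin_h] quasi_jordan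
    by (rule quasi_jordan_double_twisted)
  have central: "a * z = z * a" for z
    using semiprime twisted_jordan_obstruction_eq_0[OF two_torsion_free twisted] two_torsion_free
    by (rule obstruction_central)
  define d where "d x = f x - a * x" for x
  have "jordan_derivation d"
    unfolding d_def[abs_def] using two_torsion_free additive_if_linear[OF lin_f] central twisted
    by (rule jordan_derivation_of_central_twist)
  then have "d (x * y) = d x * y + x * d y" for x y
    using semiprime two_torsion_free by (rule jordan_derivation.derivation)
  moreover have "Vector_Spaces.linear smult smult d"
    unfolding d_def[abs_def] using lin_f linear_left_mult[OF assms(1)] by (rule linear_compose_sub)
  moreover have "(\<lambda>x. a * x) \<in> Cent smult"
    using assms(1) central by (rule left_mult_in_Cent)
  moreover have "f = (\<lambda>x. a * x + d x)"
    by (simp add: d_def)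
  ultimately show ?thesis
    unfolding map_set_sum_def Der_def by blast
qed

theorem corollary4p6:
  fixes smult :: "'f::field \<Rightarrow> 'a::ring_1 \<Rightarrow> 'a"
  assumes "is_algebra smult"
    and "semiprime TYPE('a)"
    and "(2::'f) \<noteq> 0"
  shows "QJDer smult = map_set_sum (Cent smult) (Der smult)"
proof
  have "two_torsion_free TYPE('a)"
    using assms(1,3) unfolding is_algebra_def by (blast intro: two_torsion_free_if_two_neq_0)
  then show "QJDer smult \<subseteq> map_set_sum (Cent smult) (Der smult)"
    using assms(1,2) by (blast intro: QJDer_in_Cent_Der_sum)
  show "map_set_sum (Cent smult) (Der smult) \<subseteq> QJDer smult"
    using assms(1) by (auto simp: map_set_sum_def intro: Cent_Der_sum_in_QJDer)
qed

end
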